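(* Let $q$ be a query with sensitivity $\Delta q$, let $\mu\in\mathbb R$, $\sigma>0$, $0\le a<c\le\infty$, and let the random scale $b$ be such that $1/b$ has the normal distribution $\mathcal N(\mu,\sigma^2)$ truncated to $[a,c]$, with moment generating function $M_{\mathcal N^T}$. Then the R$^2$DP Laplace mechanism $\mathcal M_q(d,b)=q(d)+\mathrm{Lap}(b)$ satisfies $\epsilon_{\mathcal N^T}$-differential privacy, where $$\epsilon_{\mathcal N^T}=\ln\left[\frac{\mu+\frac{\sigma(\phi(\alpha)-\phi(\beta))}{\Phi(\beta)-\Phi(\alpha)}}{\frac{dM_{\mathcal N^T}(t)}{dt}\big|_{t=-\Delta q}}\right],$$ with $\alpha=\frac{a-\mu}{\sigma}$, $\beta=\frac{c-\mu}{\sigma}$, $\phi$ the standard normal density and $\Phi$ the standard normal cumulative distribution function.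
   Context: The truncated normal distribution on $[a,c]$ has density $\frac{\phi((x-\mu)/\sigma)}{\sigma(\Phi(\beta)-\Phi(\alpha))}$ for $a\le x\le c$ and $0$ otherwise. $\mathrm{Lap}(b)$ is the zero-mean Laplace distribution with density $\frac1{2b}e^{-|x|/b}$; the R$^2$DP Laplace mechanism draws the random scale $b$ (independently of the data) and adds $\mathrm{Lap}(b)$ noise to $q(d)$. $\Delta q=\max|q(d)-q(d')|$ over datasets differing in one individual's data. $\epsilon$-differential privacy: $\mathbb P(\mathcal M(d)\in S)\le e^\epsilon\mathbb P(\mathcal M(d')\in S)$ for all such $d,d'$ and measurable $S$. *)

theory Defs
  imports "HOL-Probability.Probability"
begin

text \<open>Standard normal density phi and CDF Phi, extended to ereal arguments
  (Phi(+inf) = 1, phi(+inf) = 0; -inf analogously), so that c = infinity is allowed.\<close>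

definition std_normal_measure :: "real measure" where
  "std_normal_measure = density lborel std_normal_density"

definition Phi :: "ereal \<Rightarrow> real" where
  "Phi y = measure std_normal_measure {x. ereal x \<le> y}"

definition phi :: "ereal \<Rightarrow> real" where
  "phi y = (case y of ereal x \<Rightarrow> std_normal_density x | _ \<Rightarrow> 0)"

definition tn_alpha :: "real \<Rightarrow> real \<Rightarrow> real \<Rightarrow> ereal" where
  "tn_alpha \<mu> \<sigma> a = ereal ((a - \<mu>) / \<sigma>)"

definition tn_beta :: "real \<Rightarrow> real \<Rightarrow> ereal \<Rightarrow> ereal" where
  "tn_beta \<mu> \<sigma> c = (c - ereal \<mu>) / ereal \<sigma>"

definition trunc_normal :: "real \<Rightarrow> real \<Rightarrow> real \<Rightarrow> ereal \<Rightarrow> real measure" where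
  "trunc_normal \<mu> \<sigma> a c = density lborel (\<lambda>x.
     ennreal (if a \<le> x \<and> ereal x \<le> c
      then std_normal_density ((x - \<mu>) / \<sigma>) /
           (\<sigma> * (Phi (tn_beta \<mu> \<sigma> c) - Phi (tn_alpha \<mu> \<sigma> a)))
      else 0))"

definition mgf :: "real measure \<Rightarrow> real \<Rightarrow> real" where
  "mgf P t = (\<integral>x. exp (t * x) \<partial>P)"

definition laplace_density :: "real \<Rightarrow> real \<Rightarrow> real" where
  "laplace_density b x = exp (- \<bar>x\<bar> / b) / (2 * b)"

definition R2DP_laplace :: "real measure \<Rightarrow> real \<Rightarrow> real measure" where
  "R2DP_laplace B v = density lborel (\<lambda>x. \<integral>\<^sup>+ b. ennreal (laplace_density b (x - v)) \<partial>B)"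

definition sensitivity :: "('d \<Rightarrow> 'd \<Rightarrow> bool) \<Rightarrow> ('d \<Rightarrow> real) \<Rightarrow> real" where
  "sensitivity adj q = (SUP p \<in> {(d, d'). adj d d'}. \<bar>q (fst p) - q (snd p)\<bar>)"

definition differentially_private ::
    "('d \<Rightarrow> 'd \<Rightarrow> bool) \<Rightarrow> ('d \<Rightarrow> real measure) \<Rightarrow> real \<Rightarrow> bool" where
  "differentially_private adj M \<epsilon> \<longleftrightarrow>
     (\<forall>d d'. adj d d' \<longrightarrow> (\<forall>S \<in> sets borel.
        emeasure (M d) S \<le> ennreal (exp \<epsilon>) * emeasure (M d') S))"

end

theory Submission
  imports Defs "HOL-Real_Asymp.Real_Asymp"
begin

text \<open>Write \<open>R = 1 / b\<close> and \<open>F t = E[R * exp (t * R)]\<close> (\<open>mgf_deriv\<close> below), the derivative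
  of the moment generating function of \<open>R\<close>. Averaging the Laplace density over \<open>b\<close> shows that
  the output density of the mechanism at \<open>x\<close> is \<open>F (- \<bar>x - q d\<bar>) / 2\<close>. Since \<open>R \<ge> 0\<close>, \<open>F\<close> is
  increasing, and Chebyshev's correlation inequality for the co-monotone functions \<open>exp (s * R)\<close>,
  \<open>exp (t * R)\<close> under the weight \<open>R\<close> gives \<open>F s * F t \<le> F 0 * F (s + t)\<close> for \<open>s, t \<le> 0\<close>. As
  \<open>\<bar>x - q d'\<bar> \<le> \<bar>x - q d\<bar> + \<Delta>q\<close>, the ratio of the output densities for neighbouring
  datasets is at most \<open>F 0 / F (- \<Delta>q)\<close>, and \<open>F 0 = E[R]\<close> is the mean of the truncated normal.\<close>

lemma abs_exp_minus_one_le: "\<bar>exp u - 1\<bar> \<le> \<bar>u\<bar> * exp \<bar>u\<bar>" for u :: real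
proof -
  have "exp u * (1 - u) \<le> exp u * exp (- u)"
    using exp_ge_add_one_self[of "- u"] by (intro mult_left_mono) auto
  then have upper: "exp u - 1 \<le> u * exp u"
    by (simp add: exp_minus field_simps)
  have lower: "u \<le> exp u - 1"
    using exp_ge_add_one_self[of u] by linarith
  show ?thesis
  proof (cases "0 \<le> u")
    case True
    with upper lower show ?thesis by simp
  next
    case False
    then have "exp u \<le> 1" and "1 \<le> exp \<bar>u\<bar>" by auto
    with lower False show ?thesis
      by (smt (verit) mult_le_cancel_left1)
  qed
qed

lemma powr_diff_mult_diff_nonneg:
  fixes u v p :: real
  assumes "0 \<le> u" "0 \<le> v" "0 \<le> p"
  shows "0 \<le> (u powr p - v powr p) * (u - v)"
proof (cases "u \<le> v")
  case True
  then have "u powr p \<le> v powr p" using assms by (intro powr_mono2) auto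
  with True show ?thesis by (intro mult_nonpos_nonpos) auto
next
  case False
  then have "v powr p \<le> u powr p" using assms by (intro powr_mono2) auto
  with False show ?thesis by (intro mult_nonneg_nonneg) auto
qed

lemma integral_lborel_pos_of_pos_on_interval:
  fixes f :: "real \<Rightarrow> real"
  assumes int: "integrable lborel f" and nonneg: "\<And>x. 0 \<le> f x" and "l < u"
    and pos: "\<And>x. l < x \<Longrightarrow> x < u \<Longrightarrow> 0 < f x"
  shows "0 < integral\<^sup>L lborel f"
proof (rule ccontr)
  assume "\<not> 0 < integral\<^sup>L lborel f"
  moreover have "0 \<le> integral\<^sup>L lborel f"
    using nonneg by simp
  ultimately have "integral\<^sup>L lborel f = 0"
    by simp
  then have "AE x in lborel. f x = 0"
    using integral_nonneg_eq_0_iff_AE[OF int] nonneg by simp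
  then have "AE x in lborel. x \<notin> {l<..<u}"
    by eventually_elim (use pos in force)
  then have "emeasure lborel {l<..<u} = 0"
    by (subst (asm) AE_iff_measurable[of "{l<..<u}"]) auto
  with \<open>l < u\<close> show False by simp
qed

lemma emeasure_density_le_cmult:
  fixes f g :: "'a \<Rightarrow> ennreal"
  assumes [measurable]: "f \<in> borel_measurable M" "g \<in> borel_measurable M" "A \<in> sets M"
    and le: "\<And>x. f x \<le> K * g x"
  shows "emeasure (density M f) A \<le> K * emeasure (density M g) A"
proof -
  have "emeasure (density M f) A = (\<integral>\<^sup>+ x. f x * indicator A x \<partial>M)"
    by (rule emeasure_density) measurable
  also have "\<dots> \<le> (\<integral>\<^sup>+ x. K * (g x * indicator A x) \<partial>M)"
    by (intro nn_integral_mono) (auto simp: le mult.assoc[symmetric] intro: mult_right_mono split: split_indicator)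
  also have "\<dots> = K * emeasure (density M g) A"
    by (simp add: nn_integral_cmult emeasure_density)
  finally show ?thesis .
qed

lemma abs_le_sensitivity:
  assumes "bdd_above ((\<lambda>p. \<bar>q (fst p) - q (snd p)\<bar>) ` {(d, d'). adj d d'})" and "adj d d'"
  shows "\<bar>q d - q d'\<bar> \<le> sensitivity adj q"
  unfolding sensitivity_def using cSUP_upper[OF _ assms(1), of "(d, d')"] assms(2) by simp

lemma laplace_density_inverse: "laplace_density (1 / r) y = r * exp (- \<bar>y\<bar> * r) / 2"
  by (cases "r = 0") (simp_all add: laplace_density_def field_simps)

section \<open>Laplace noise with a random scale\<close>

definition mgf_deriv :: "real measure \<Rightarrow> real \<Rightarrow> real" where
  "mgf_deriv M t = (\<integral>x. x * exp (t * x) \<partial>M)"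

locale nonneg_exp_moments =
  fixes M :: "real measure"
  assumes sets_eq_borel: "sets M = sets borel"
    and AE_nonneg: "AE x in M. 0 \<le> x"
    and integrable_exp: "\<And>t. integrable M (\<lambda>x. exp (t * x))"
begin

lemma borel_measurable_eq: "borel_measurable M = borel_measurable borel"
  by (rule measurable_cong_sets[OF sets_eq_borel refl])

lemma integrable_mult_exp: "integrable M (\<lambda>x. x * exp (t * x))"
proof (rule Bochner_Integration.integrable_bound[OF integrable_exp[of "t + 1"]])
  show "(\<lambda>x. x * exp (t * x)) \<in> borel_measurable M"
    unfolding borel_measurable_eq by measurable
  show "AE x in M. norm (x * exp (t * x)) \<le> norm (exp ((t + 1) * x))"
    using AE_nonneg
  proof eventually_elim
    case (elim x)
    have "x \<le> exp x"
      using exp_ge_add_one_self[of x] by linarith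
    then have "x * exp (t * x) \<le> exp x * exp (t * x)"
      by (intro mult_right_mono) auto
    with elim show ?case by (simp add: exp_add[symmetric] algebra_simps)
  qed
qed

lemma mgf_deriv_nonneg: "0 \<le> mgf_deriv M t"
  unfolding mgf_deriv_def using AE_nonneg by (intro integral_nonneg_AE) auto

lemma mgf_deriv_mono:
  assumes "s \<le> t"
  shows "mgf_deriv M s \<le> mgf_deriv M t"
  unfolding mgf_deriv_def
proof (rule integral_mono_AE[OF integrable_mult_exp integrable_mult_exp])
  show "AE x in M. x * exp (s * x) \<le> x * exp (t * x)"
    using AE_nonneg by eventually_elim (use assms in \<open>auto intro!: mult_left_mono mult_right_mono\<close>)
qed

lemma borel_measurable_mgf_deriv[measurable]: "mgf_deriv M \<in> borel_measurable borel"
  by (rule borel_measurable_mono) (auto simp: mono_def intro: mgf_deriv_mono)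

lemma has_real_derivative_mgf: "(mgf M has_real_derivative mgf_deriv M t) (at t)"
proof -
  define Q where "Q h x = (exp ((t + h) * x) - exp (t * x)) / h" for h x
  have quotient_eq: "(mgf M (t + h) - mgf M t) / h = (\<integral>x. Q h x \<partial>M)" for h
    unfolding Q_def mgf_def by (simp add: Bochner_Integration.integral_diff[OF integrable_exp integrable_exp])
  have Q_bound: "\<bar>Q h x\<bar> \<le> x * exp ((t + 1) * x)" if "0 \<le> x" "h \<noteq> 0" "\<bar>h\<bar> \<le> 1" for h x
  proof -
    have "Q h x = exp (t * x) * (exp (h * x) - 1) / h"
      unfolding Q_def by (simp add: algebra_simps exp_add[symmetric])
    then have "\<bar>Q h x\<bar> = exp (t * x) * \<bar>exp (h * x) - 1\<bar> / \<bar>h\<bar>"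
      by (simp add: abs_mult)
    also have "\<dots> \<le> exp (t * x) * (\<bar>h * x\<bar> * exp \<bar>h * x\<bar>) / \<bar>h\<bar>"
      by (intro divide_right_mono mult_left_mono abs_exp_minus_one_le) auto
    also have "\<dots> = exp (t * x) * x * exp (\<bar>h\<bar> * x)"
      using that by (simp add: abs_mult)
    also have "\<dots> \<le> exp (t * x) * x * exp x"
      using that by (intro mult_left_mono) (auto intro: mult_left_le_one_le)
    finally show ?thesis by (simp add: algebra_simps exp_add[symmetric])
  qed
  have "((\<lambda>h. \<integral>x. Q h x \<partial>M) \<longlongrightarrow> mgf_deriv M t) (at 0 within ball 0 1)"
    unfolding tendsto_at_iff_sequentially comp_def mgf_deriv_def
  proof (intro allI impI)
    fix X :: "nat \<Rightarrow> real"
    assume X: "\<forall>i. X i \<in> ball 0 1 - {0}" and X_lim: "X \<longlonglongrightarrow> 0"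
    show "(\<lambda>i. \<integral>x. Q (X i) x \<partial>M) \<longlonglongrightarrow> (\<integral>x. x * exp (t * x) \<partial>M)"
    proof (rule integral_dominated_convergence[OF _ _ integrable_mult_exp[of "t + 1"]])
      show "(\<lambda>x. x * exp (t * x)) \<in> borel_measurable M" "(\<lambda>x. Q (X i) x) \<in> borel_measurable M" for i
        unfolding borel_measurable_eq Q_def by measurable
      show "AE x in M. norm (Q (X i) x) \<le> x * exp ((t + 1) * x)" for i
        using AE_nonneg by eventually_elim (use X Q_bound in \<open>auto simp: less_imp_le\<close>)
      show "AE x in M. (\<lambda>i. Q (X i) x) \<longlonglongrightarrow> x * exp (t * x)"
      proof (rule AE_I2)
        fix x
        have "((\<lambda>s. exp (s * x)) has_real_derivative x * exp (t * x)) (at t)"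
          by (auto intro!: derivative_eq_intros)
        then have "((\<lambda>h. Q h x) \<longlongrightarrow> x * exp (t * x)) (at 0)"
          unfolding DERIV_def Q_def by simp
        then show "(\<lambda>i. Q (X i) x) \<longlonglongrightarrow> x * exp (t * x)"
          unfolding tendsto_at_iff_sequentially comp_def using X X_lim by auto
      qed
    qed
  qed
  moreover have "at (0::real) within ball 0 1 = at 0"
    by (rule at_within_open) auto
  ultimately show ?thesis
    unfolding DERIV_def quotient_eq by simp
qed

lemma deriv_mgf: "deriv (mgf M) t = mgf_deriv M t"
  by (rule DERIV_imp_deriv[OF has_real_derivative_mgf])

text \<open>Since \<open>exp (s * x) = exp (t * x) powr p\<close> with \<open>p = s / t \<ge> 0\<close>, the two factors of
  \<open>(exp (t * x) powr p - g powr p) * (exp (t * x) - g)\<close> have the same sign for every constant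
  \<open>g \<ge> 0\<close>; integrating against \<open>x\<close> with \<open>g = mgf_deriv M t / mgf_deriv M 0\<close> gives the claim.\<close>

lemma mgf_deriv_mult_le:
  assumes "s \<le> 0" "t \<le> 0"
  shows "mgf_deriv M s * mgf_deriv M t \<le> mgf_deriv M 0 * mgf_deriv M (s + t)"
proof (cases "s = 0 \<or> t = 0 \<or> mgf_deriv M 0 = 0")
  case True
  moreover have "mgf_deriv M s = 0" if "mgf_deriv M 0 = 0"
    using mgf_deriv_mono[of s 0] mgf_deriv_nonneg[of s] assms that by simp
  ultimately show ?thesis
    using mgf_deriv_nonneg by (auto simp: mult.commute)
next
  case False
  let ?E = "mgf_deriv M"
  have "t < 0" and E0_pos: "0 < ?E 0"
    using False assms mgf_deriv_nonneg[of 0] by auto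
  define g where "g = ?E t / ?E 0"
  define p where "p = s / t"
  have "0 \<le> g" "0 \<le> p"
    unfolding g_def p_def using mgf_deriv_nonneg[of t] E0_pos assms \<open>t < 0\<close>
    by (auto simp: divide_nonpos_neg)
  have has_int: "has_bochner_integral M (\<lambda>x. x * exp (u * x)) (?E u)" for u
    unfolding mgf_deriv_def by (rule has_bochner_integral_integrable[OF integrable_mult_exp])
  have "has_bochner_integral M
      (\<lambda>x. x * exp ((s + t) * x) - g * (x * exp (s * x)) - g powr p * (x * exp (t * x))
        + g powr p * g * (x * exp (0 * x)))
      (?E (s + t) - g * ?E s - g powr p * ?E t + g powr p * g * ?E 0)"
    by (intro has_bochner_integral_add has_bochner_integral_diff has_bochner_integral_mult_right has_int)
  moreover have "(\<lambda>x. x * exp ((s + t) * x) - g * (x * exp (s * x)) - g powr p * (x * exp (t * x))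
        + g powr p * g * (x * exp (0 * x)))
      = (\<lambda>x. x * ((exp (t * x) powr p - g powr p) * (exp (t * x) - g)))"
  proof
    fix x
    have "exp (t * x) powr p = exp (s * x)"
      unfolding powr_def p_def using \<open>t < 0\<close> by simp
    then show "x * exp ((s + t) * x) - g * (x * exp (s * x)) - g powr p * (x * exp (t * x))
        + g powr p * g * (x * exp (0 * x))
      = x * ((exp (t * x) powr p - g powr p) * (exp (t * x) - g))"
      by (simp add: algebra_simps exp_add[symmetric])
  qed
  moreover have "0 \<le> (\<integral>x. x * ((exp (t * x) powr p - g powr p) * (exp (t * x) - g)) \<partial>M)"
    using AE_nonneg
    by (intro integral_nonneg_AE, eventually_elim, intro mult_nonneg_nonneg powr_diff_mult_diff_nonneg)
      (use \<open>0 \<le> g\<close> \<open>0 \<le> p\<close> in auto)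
  ultimately have "0 \<le> ?E (s + t) - g * ?E s - g powr p * ?E t + g powr p * g * ?E 0"
    by (simp add: has_bochner_integral_iff)
  moreover have "g powr p * g * ?E 0 = g powr p * ?E t"
    unfolding g_def using E0_pos by simp
  ultimately have "g * ?E s \<le> ?E (s + t)"
    by simp
  then show ?thesis
    unfolding g_def
    using E0_pos by (simp add: field_simps)
qed

lemma mgf_deriv_shift_le:
  assumes "0 \<le> s" "0 \<le> \<Delta>" "s' \<le> s + \<Delta>" and pos: "0 < mgf_deriv M (- \<Delta>)"
  shows "mgf_deriv M (- s) \<le> mgf_deriv M 0 / mgf_deriv M (- \<Delta>) * mgf_deriv M (- s')"
proof -
  have "mgf_deriv M (- s) * mgf_deriv M (- \<Delta>) \<le> mgf_deriv M 0 * mgf_deriv M (- s + - \<Delta>)"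
    using assms by (intro mgf_deriv_mult_le) auto
  also have "\<dots> \<le> mgf_deriv M 0 * mgf_deriv M (- s')"
    using assms by (intro mult_left_mono mgf_deriv_mono mgf_deriv_nonneg) auto
  finally show ?thesis
    using pos by (simp add: field_simps)
qed

lemma R2DP_laplace_inverse:
  "R2DP_laplace (distr M borel (\<lambda>r. 1 / r)) v
     = density lborel (\<lambda>x. ennreal (mgf_deriv M (- \<bar>x - v\<bar>) / 2))"
  unfolding R2DP_laplace_def
proof (intro arg_cong[where f = "density lborel"] ext)
  fix x
  have "(\<integral>\<^sup>+ b. ennreal (laplace_density b (x - v)) \<partial>distr M borel (\<lambda>r. 1 / r))
      = (\<integral>\<^sup>+ r. ennreal (laplace_density (1 / r) (x - v)) \<partial>M)"
    by (rule nn_integral_distr) (auto simp: borel_measurable_eq laplace_density_def)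
  also have "\<dots> = (\<integral>\<^sup>+ r. ennreal (r * exp (- \<bar>x - v\<bar> * r) / 2) \<partial>M)"
    by (simp add: laplace_density_inverse)
  also have "\<dots> = ennreal (\<integral>r. r * exp (- \<bar>x - v\<bar> * r) / 2 \<partial>M)"
    using AE_nonneg by (intro nn_integral_eq_integral integrable_divide_zero integrable_mult_exp) auto
  also have "\<dots> = ennreal (mgf_deriv M (- \<bar>x - v\<bar>) / 2)"
    by (simp add: mgf_deriv_def)
  finally show "(\<integral>\<^sup>+ b. ennreal (laplace_density b (x - v)) \<partial>distr M borel (\<lambda>r. 1 / r))
      = ennreal (mgf_deriv M (- \<bar>x - v\<bar>) / 2)" .
qed

theorem differentially_private_R2DP_laplace_inverse:
  assumes sens_bdd: "bdd_above ((\<lambda>p. \<bar>q (fst p) - q (snd p)\<bar>) ` {(d, d'). adj d d'})"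
    and pos: "0 < mgf_deriv M (- sensitivity adj q)"
  shows "differentially_private adj (\<lambda>d. R2DP_laplace (distr M borel (\<lambda>r. 1 / r)) (q d))
           (ln (mgf_deriv M 0 / mgf_deriv M (- sensitivity adj q)))"
  unfolding differentially_private_def
proof (intro allI impI ballI)
  fix d d' and S :: "real set"
  assume "adj d d'" and S: "S \<in> sets borel"
  let ?\<Delta> = "sensitivity adj q"
  let ?K = "mgf_deriv M 0 / mgf_deriv M (- ?\<Delta>)"
  have "\<bar>q d - q d'\<bar> \<le> ?\<Delta>"
    using abs_le_sensitivity[OF sens_bdd \<open>adj d d'\<close>] .
  then have "mgf_deriv M (- ?\<Delta>) \<le> mgf_deriv M 0"
    by (intro mgf_deriv_mono) linarith
  with pos have "0 < ?K"
    by simp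
  have "ennreal (mgf_deriv M (- \<bar>x - q d\<bar>) / 2) \<le> ennreal ?K * ennreal (mgf_deriv M (- \<bar>x - q d'\<bar>) / 2)" for x
  proof -
    have "mgf_deriv M (- \<bar>x - q d\<bar>) \<le> ?K * mgf_deriv M (- \<bar>x - q d'\<bar>)"
      using \<open>\<bar>q d - q d'\<bar> \<le> ?\<Delta>\<close> pos by (intro mgf_deriv_shift_le) auto
    then show ?thesis
      using \<open>0 < ?K\<close> mgf_deriv_nonneg by (simp add: ennreal_mult[symmetric] ennreal_leI)
  qed
  then have "emeasure (R2DP_laplace (distr M borel (\<lambda>r. 1 / r)) (q d)) S
      \<le> ennreal ?K * emeasure (R2DP_laplace (distr M borel (\<lambda>r. 1 / r)) (q d')) S"
    unfolding R2DP_laplace_inverse using S by (intro emeasure_density_le_cmult) auto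
  then show "emeasure (R2DP_laplace (distr M borel (\<lambda>r. 1 / r)) (q d)) S
      \<le> ennreal (exp (ln ?K)) * emeasure (R2DP_laplace (distr M borel (\<lambda>r. 1 / r)) (q d')) S"
    using \<open>0 < ?K\<close> by simp
qed

end

section \<open>The standard normal distribution\<close>

lemma std_normal_density_scale:
  assumes "0 < \<sigma>"
  shows "std_normal_density ((r - \<mu>) / \<sigma>) / \<sigma> = normal_density \<mu> \<sigma> r"
proof -
  have "sqrt (2 * pi * \<sigma>\<^sup>2) = sqrt (2 * pi) * \<sigma>"
    using assms by (simp add: real_sqrt_mult)
  moreover have "((r - \<mu>) / \<sigma>)\<^sup>2 = (r - \<mu>)\<^sup>2 / \<sigma>\<^sup>2"
    by (simp add: power_divide)
  ultimately show ?thesis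
    unfolding normal_density_def using assms by (simp add: field_simps)
qed

lemma exp_mult_normal_density:
  assumes "0 < \<sigma>"
  shows "exp (s * r) * normal_density \<mu> \<sigma> r
    = exp (s * \<mu> + s\<^sup>2 * \<sigma>\<^sup>2 / 2) * normal_density (\<mu> + s * \<sigma>\<^sup>2) \<sigma> r"
proof -
  have "s * r - (r - \<mu>)\<^sup>2 / (2 * \<sigma>\<^sup>2)
      = (s * \<mu> + s\<^sup>2 * \<sigma>\<^sup>2 / 2) - (r - (\<mu> + s * \<sigma>\<^sup>2))\<^sup>2 / (2 * \<sigma>\<^sup>2)"
    using assms by (simp add: field_simps power2_eq_square)
  then have "exp (s * r) * exp (- (r - \<mu>)\<^sup>2 / (2 * \<sigma>\<^sup>2))
      = exp (s * \<mu> + s\<^sup>2 * \<sigma>\<^sup>2 / 2) * exp (- (r - (\<mu> + s * \<sigma>\<^sup>2))\<^sup>2 / (2 * \<sigma>\<^sup>2))"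
    by (simp add: exp_add[symmetric])
  then show ?thesis
    unfolding normal_density_def by (simp add: mult.left_commute)
qed

lemma DERIV_neg_std_normal_density:
  "((\<lambda>z. - std_normal_density z) has_real_derivative z * std_normal_density z) (at z)"
proof -
  have "sqrt (2 * pi) * sqrt (2 * pi) = 2 * pi"
    by simp
  then show ?thesis
    unfolding std_normal_density_def
    by (auto intro!: derivative_eq_intros simp: power2_eq_square field_simps)
qed

lemma phi_tendsto_at_right:
  assumes "l \<noteq> \<infinity>"
  shows "((std_normal_density \<circ> real_of_ereal) \<longlongrightarrow> phi l) (at_right l)"
proof (cases l)
  case (real r)
  have "isCont std_normal_density r"
    unfolding std_normal_density_def by (auto intro!: continuous_intros)
  then show ?thesis
    using real by (simp add: ereal_tendsto_simps1 phi_def isCont_def filterlim_at_split)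
next
  case MInf
  have "(std_normal_density \<longlongrightarrow> 0) at_bot"
    unfolding std_normal_density_def by real_asymp
  then show ?thesis
    using MInf by (simp add: ereal_tendsto_simps1 phi_def)
qed (use assms in simp)

lemma phi_tendsto_at_left:
  assumes "u \<noteq> - \<infinity>"
  shows "((std_normal_density \<circ> real_of_ereal) \<longlongrightarrow> phi u) (at_left u)"
proof (cases u)
  case (real r)
  have "isCont std_normal_density r"
    unfolding std_normal_density_def by (auto intro!: continuous_intros)
  then show ?thesis
    using real by (simp add: ereal_tendsto_simps1 phi_def isCont_def filterlim_at_split)
next
  case PInf
  have "(std_normal_density \<longlongrightarrow> 0) at_top"
    unfolding std_normal_density_def by real_asymp
  then show ?thesis
    using PInf by (simp add: ereal_tendsto_simps1 phi_def)
qed (use assms in simp)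

lemma LBINT_std_normal_first_moment:
  assumes "l < u"
  shows "(LBINT z=l..u. z * std_normal_density z) = phi l - phi u"
proof -
  have "(LBINT z=l..u. z * std_normal_density z) = - phi u - - phi l"
  proof (rule interval_integral_FTC_integrable[OF assms])
    show "((\<lambda>z. - std_normal_density z) has_vector_derivative z * std_normal_density z) (at z)" for z
      using DERIV_neg_std_normal_density by (simp add: has_real_derivative_iff_has_vector_derivative)
    show "isCont (\<lambda>z. z * std_normal_density z) z" for z
      unfolding std_normal_density_def by (auto intro!: continuous_intros)
    show "set_integrable lborel (einterval l u) (\<lambda>z. z * std_normal_density z)"
      unfolding set_integrable_def using integrable_std_normal_moment[of 1]
      by (intro integrable_mult_indicator) (auto simp: mult.commute)
    have "l \<noteq> \<infinity>" "u \<noteq> - \<infinity>"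
      using assms by auto
    then show "(((\<lambda>z. - std_normal_density z) \<circ> real_of_ereal) \<longlongrightarrow> - phi l) (at_right l)"
      and "(((\<lambda>z. - std_normal_density z) \<circ> real_of_ereal) \<longlongrightarrow> - phi u) (at_left u)"
      using tendsto_minus[OF phi_tendsto_at_right[of l]] tendsto_minus[OF phi_tendsto_at_left[of u]]
      by (simp_all add: comp_def)
  qed
  then show ?thesis
    by simp
qed

lemma prob_space_std_normal_measure: "prob_space std_normal_measure"
  unfolding std_normal_measure_def by (rule prob_space_normal_density) simp

lemma measure_std_normal_measure:
  assumes [measurable]: "A \<in> sets borel"
  shows "measure std_normal_measure A = (LBINT x:A. std_normal_density x)"
proof -
  interpret prob_space std_normal_measure
    by (rule prob_space_std_normal_measure)
  have "measure std_normal_measure A = (\<integral>x. indicator A x \<partial>std_normal_measure)"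
    by (simp add: std_normal_measure_def)
  also have "\<dots> = (LBINT x:A. std_normal_density x)"
    unfolding std_normal_measure_def set_lebesgue_integral_def
    by (subst integral_density) (auto simp: mult.commute)
  finally show ?thesis .
qed

lemma Phi_diff_eq_LBINT:
  assumes "l \<le> u"
  shows "Phi u - Phi l = (LBINT z=l..u. std_normal_density z)"
proof -
  interpret prob_space std_normal_measure
    by (rule prob_space_std_normal_measure)
  have "Phi u - Phi l = measure std_normal_measure ({x. ereal x \<le> u} - {x. ereal x \<le> l})"
    unfolding Phi_def using assms
    by (subst finite_measure_Diff) (auto simp: std_normal_measure_def)
  also have "\<dots> = (LBINT z:{x. l < ereal x \<and> ereal x \<le> u}. std_normal_density z)"
    by (subst measure_std_normal_measure) (auto simp: set_diff_eq not_le conj_commute)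
  also have "\<dots> = (LBINT z=l..u. std_normal_density z)"
    using assms by (simp add: interval_integral_Ioc')
  finally show ?thesis .
qed

section \<open>The truncated normal distribution\<close>

definition trunc_normal_density :: "real \<Rightarrow> real \<Rightarrow> real \<Rightarrow> ereal \<Rightarrow> real \<Rightarrow> real" where
  "trunc_normal_density \<mu> \<sigma> a c x =
     (if a \<le> x \<and> ereal x \<le> c
      then std_normal_density ((x - \<mu>) / \<sigma>) /
           (\<sigma> * (Phi (tn_beta \<mu> \<sigma> c) - Phi (tn_alpha \<mu> \<sigma> a)))
      else 0)"

lemma trunc_normal_eq_density:
  "trunc_normal \<mu> \<sigma> a c = density lborel (\<lambda>x. ennreal (trunc_normal_density \<mu> \<sigma> a c x))"
  unfolding trunc_normal_def trunc_normal_density_def ..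

lemma borel_measurable_trunc_normal_density[measurable]:
  "trunc_normal_density \<mu> \<sigma> a c \<in> borel_measurable borel"
  unfolding trunc_normal_density_def[abs_def] by measurable

locale truncated_normal =
  fixes \<mu> \<sigma> a :: real and c :: ereal
  assumes sigma_pos: "0 < \<sigma>" and a_nonneg: "0 \<le> a" and a_less_c: "ereal a < c"
begin

lemma tn_alpha_less_tn_beta: "tn_alpha \<mu> \<sigma> a < tn_beta \<mu> \<sigma> c"
proof (cases c)
  case (real c')
  with a_less_c sigma_pos show ?thesis
    by (simp add: tn_alpha_def tn_beta_def divide_strict_right_mono)
qed (use a_less_c sigma_pos in \<open>simp_all add: tn_alpha_def tn_beta_def\<close>)

lemma affine_mem_support_iff:
  "a \<le> \<mu> + \<sigma> * z \<and> ereal (\<mu> + \<sigma> * z) \<le> c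
     \<longleftrightarrow> tn_alpha \<mu> \<sigma> a \<le> ereal z \<and> ereal z \<le> tn_beta \<mu> \<sigma> c"
proof -
  have "a \<le> \<mu> + \<sigma> * z \<longleftrightarrow> (a - \<mu>) / \<sigma> \<le> z"
    using sigma_pos by (simp add: pos_divide_le_eq algebra_simps)
  moreover have "ereal (\<mu> + \<sigma> * z) \<le> c \<longleftrightarrow> ereal z \<le> tn_beta \<mu> \<sigma> c"
    by (cases c) (use sigma_pos in \<open>simp_all add: tn_beta_def pos_le_divide_eq algebra_simps\<close>)
  ultimately show ?thesis
    by (simp add: tn_alpha_def)
qed

lemma Phi_diff_pos: "0 < Phi (tn_beta \<mu> \<sigma> c) - Phi (tn_alpha \<mu> \<sigma> a)"
proof -
  let ?l = "(a - \<mu>) / \<sigma>" and ?I = "einterval (tn_alpha \<mu> \<sigma> a) (tn_beta \<mu> \<sigma> c)"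
  obtain u where u: "ereal ?l < ereal u" "ereal u < tn_beta \<mu> \<sigma> c"
    using ereal_dense2[OF tn_alpha_less_tn_beta] by (auto simp: tn_alpha_def)
  have "0 < (\<integral>z. indicator ?I z * std_normal_density z \<partial>lborel)"
  proof (rule integral_lborel_pos_of_pos_on_interval[of _ ?l u])
    show "integrable lborel (\<lambda>z. indicator ?I z * std_normal_density z)"
      using integrable_mult_indicator[of ?I lborel std_normal_density] by simp
    fix z assume "?l < z" "z < u"
    then have "ereal z < tn_beta \<mu> \<sigma> c"
      using order.strict_trans[OF _ u(2), of "ereal z"] by simp
    with \<open>?l < z\<close> have "z \<in> ?I"
      by (simp add: einterval_iff tn_alpha_def)
    then show "0 < indicator ?I z * std_normal_density z"
      by (simp add: normal_density_pos)
  qed (use u in auto)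
  then show ?thesis
    using tn_alpha_less_tn_beta
    by (simp add: Phi_diff_eq_LBINT interval_lebesgue_integral_def set_lebesgue_integral_def)
qed

lemma trunc_normal_density_nonneg: "0 \<le> trunc_normal_density \<mu> \<sigma> a c x"
  using Phi_diff_pos sigma_pos by (simp add: trunc_normal_density_def)

lemma trunc_normal_density_le:
  "trunc_normal_density \<mu> \<sigma> a c x
     \<le> normal_density \<mu> \<sigma> x / (Phi (tn_beta \<mu> \<sigma> c) - Phi (tn_alpha \<mu> \<sigma> a))"
  using std_normal_density_scale[OF sigma_pos, of x \<mu>] Phi_diff_pos
  by (simp add: trunc_normal_density_def divide_divide_eq_left[symmetric])

lemma integral_trunc_normal:
  "f \<in> borel_measurable borel \<Longrightarrow>
     (\<integral>x. f x \<partial>trunc_normal \<mu> \<sigma> a c) = (\<integral>x. trunc_normal_density \<mu> \<sigma> a c x * f x \<partial>lborel)"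
  unfolding trunc_normal_eq_density by (subst integral_density) (auto simp: trunc_normal_density_nonneg)

lemma integrable_trunc_normal_iff:
  "f \<in> borel_measurable borel \<Longrightarrow>
     integrable (trunc_normal \<mu> \<sigma> a c) f \<longleftrightarrow> integrable lborel (\<lambda>x. trunc_normal_density \<mu> \<sigma> a c x * f x)"
  unfolding trunc_normal_eq_density by (subst integrable_density) (auto simp: trunc_normal_density_nonneg)

lemma integrable_trunc_normal_exp: "integrable (trunc_normal \<mu> \<sigma> a c) (\<lambda>x. exp (t * x))"
proof (subst integrable_trunc_normal_iff)
  let ?C = "exp (t * \<mu> + t\<^sup>2 * \<sigma>\<^sup>2 / 2) / (Phi (tn_beta \<mu> \<sigma> c) - Phi (tn_alpha \<mu> \<sigma> a))"
  show "integrable lborel (\<lambda>x. trunc_normal_density \<mu> \<sigma> a c x * exp (t * x))"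
  proof (rule Bochner_Integration.integrable_bound)
    show "integrable lborel (\<lambda>x. ?C * normal_density (\<mu> + t * \<sigma>\<^sup>2) \<sigma> x)"
      using sigma_pos by (intro integrable_mult_right integrable_normal_density)
    show "AE x in lborel. norm (trunc_normal_density \<mu> \<sigma> a c x * exp (t * x))
        \<le> norm (?C * normal_density (\<mu> + t * \<sigma>\<^sup>2) \<sigma> x)"
    proof (rule AE_I2)
      fix x
      have "trunc_normal_density \<mu> \<sigma> a c x * exp (t * x)
          \<le> normal_density \<mu> \<sigma> x / (Phi (tn_beta \<mu> \<sigma> c) - Phi (tn_alpha \<mu> \<sigma> a)) * exp (t * x)"
        by (intro mult_right_mono trunc_normal_density_le) auto
      also have "\<dots> = ?C * normal_density (\<mu> + t * \<sigma>\<^sup>2) \<sigma> x"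
        using exp_mult_normal_density[OF sigma_pos, of t x \<mu>] by (simp add: field_simps)
      finally show "norm (trunc_normal_density \<mu> \<sigma> a c x * exp (t * x))
          \<le> norm (?C * normal_density (\<mu> + t * \<sigma>\<^sup>2) \<sigma> x)"
        using trunc_normal_density_nonneg[of x] Phi_diff_pos by simp
    qed
  qed simp
qed simp

lemma AE_trunc_normal_ge: "AE x in trunc_normal \<mu> \<sigma> a c. a \<le> x"
  unfolding trunc_normal_eq_density
  by (subst AE_density) (auto simp: trunc_normal_density_def)

sublocale nonneg_exp_moments "trunc_normal \<mu> \<sigma> a c"
proof
  show "sets (trunc_normal \<mu> \<sigma> a c) = sets borel"
    by (simp add: trunc_normal_eq_density)
  show "AE x in trunc_normal \<mu> \<sigma> a c. 0 \<le> x"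
    using AE_trunc_normal_ge by eventually_elim (use a_nonneg in simp)
qed (rule integrable_trunc_normal_exp)

lemma mgf_deriv_trunc_normal_pos: "0 < mgf_deriv (trunc_normal \<mu> \<sigma> a c) t"
proof -
  obtain u where u: "ereal a < ereal u" "ereal u < c"
    using ereal_dense2[OF a_less_c] by blast
  have "0 < (\<integral>x. trunc_normal_density \<mu> \<sigma> a c x * (x * exp (t * x)) \<partial>lborel)"
  proof (rule integral_lborel_pos_of_pos_on_interval[of _ a u])
    show "integrable lborel (\<lambda>x. trunc_normal_density \<mu> \<sigma> a c x * (x * exp (t * x)))"
      using integrable_mult_exp[of t] by (simp add: integrable_trunc_normal_iff)
    show "0 \<le> trunc_normal_density \<mu> \<sigma> a c x * (x * exp (t * x))" for x
      using a_nonneg Phi_diff_pos sigma_pos by (auto simp: trunc_normal_density_def)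
    fix x assume "a < x" "x < u"
    then have "ereal x < c"
      using order.strict_trans[OF _ u(2), of "ereal x"] by simp
    with \<open>a < x\<close> a_nonneg Phi_diff_pos sigma_pos
    show "0 < trunc_normal_density \<mu> \<sigma> a c x * (x * exp (t * x))"
      by (simp add: trunc_normal_density_def normal_density_pos)
  qed (use u in simp)
  then show ?thesis
    by (simp add: mgf_deriv_def integral_trunc_normal)
qed

lemma trunc_normal_density_affine:
  "trunc_normal_density \<mu> \<sigma> a c (\<mu> + \<sigma> * z)
     = indicator {z. tn_alpha \<mu> \<sigma> a \<le> ereal z \<and> ereal z \<le> tn_beta \<mu> \<sigma> c} z * std_normal_density z
       / (\<sigma> * (Phi (tn_beta \<mu> \<sigma> c) - Phi (tn_alpha \<mu> \<sigma> a)))"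
  using affine_mem_support_iff[of z] sigma_pos
  by (simp add: trunc_normal_density_def indicator_def)

lemma trunc_normal_mean:
  "(\<integral>x. x \<partial>trunc_normal \<mu> \<sigma> a c)
     = \<mu> + \<sigma> * (phi (tn_alpha \<mu> \<sigma> a) - phi (tn_beta \<mu> \<sigma> c))
         / (Phi (tn_beta \<mu> \<sigma> c) - Phi (tn_alpha \<mu> \<sigma> a))"
proof -
  let ?\<alpha> = "tn_alpha \<mu> \<sigma> a" and ?\<beta> = "tn_beta \<mu> \<sigma> c"
  let ?S = "{z. ?\<alpha> \<le> ereal z \<and> ereal z \<le> ?\<beta>}" and ?Z = "Phi ?\<beta> - Phi ?\<alpha>"
  have LBINT_eq: "(LBINT z=?\<alpha>..?\<beta>. f z) = (\<integral>z. indicator ?S z * f z \<partial>lborel)" for f :: "real \<Rightarrow> real"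
    using tn_alpha_less_tn_beta by (simp add: interval_integral_Icc' set_lebesgue_integral_def real_scaleR_def)
  have int0: "integrable lborel (\<lambda>z. indicator ?S z * std_normal_density z)"
    using integrable_mult_indicator[of ?S lborel std_normal_density] by simp
  have int1: "integrable lborel (\<lambda>z. indicator ?S z * (z * std_normal_density z))"
    using integrable_mult_indicator[of ?S lborel "\<lambda>z. std_normal_density z * z ^ 1"]
      integrable_std_normal_moment[of 1] by (simp add: mult.commute)
  have "(\<integral>x. x \<partial>trunc_normal \<mu> \<sigma> a c) = (\<integral>x. trunc_normal_density \<mu> \<sigma> a c x * x \<partial>lborel)"
    by (simp add: integral_trunc_normal)
  also have "\<dots> = \<sigma> * (\<integral>z. trunc_normal_density \<mu> \<sigma> a c (\<mu> + \<sigma> * z) * (\<mu> + \<sigma> * z) \<partial>lborel)"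
    using lborel_integral_real_affine[of \<sigma> "\<lambda>x. trunc_normal_density \<mu> \<sigma> a c x * x" \<mu>] sigma_pos
    by simp
  also have "\<dots> = \<sigma> * (\<integral>z. (\<mu> * (indicator ?S z * std_normal_density z)
      + \<sigma> * (indicator ?S z * (z * std_normal_density z))) / (\<sigma> * ?Z) \<partial>lborel)"
    unfolding trunc_normal_density_affine
    by (intro arg_cong[where f = "(*) \<sigma>"] Bochner_Integration.integral_cong refl)
      (simp add: field_simps)
  also have "\<dots> = (\<mu> * (\<integral>z. indicator ?S z * std_normal_density z \<partial>lborel)
      + \<sigma> * (\<integral>z. indicator ?S z * (z * std_normal_density z) \<partial>lborel)) / ?Z"
    using sigma_pos
    by (simp add: Bochner_Integration.integral_add[OF integrable_mult_right[OF int0] integrable_mult_right[OF int1]])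
  also have "\<dots> = (\<mu> * ?Z + \<sigma> * (phi ?\<alpha> - phi ?\<beta>)) / ?Z"
    using tn_alpha_less_tn_beta
    by (simp add: Phi_diff_eq_LBINT LBINT_std_normal_first_moment LBINT_eq[symmetric])
  also have "\<dots> = \<mu> + \<sigma> * (phi ?\<alpha> - phi ?\<beta>) / ?Z"
    using Phi_diff_pos by (simp add: field_simps)
  finally show ?thesis .
qed

end

theorem theoremB5:
  fixes adj :: "'d \<Rightarrow> 'd \<Rightarrow> bool" and q :: "'d \<Rightarrow> real"
    and \<mu> \<sigma> a :: real and c :: ereal
  assumes sens_bdd: "bdd_above ((\<lambda>p. \<bar>q (fst p) - q (snd p)\<bar>) ` {(d, d'). adj d d'})"
    and \<sigma>_pos: "\<sigma> > 0" and a_nonneg: "0 \<le> a" and a_less_c: "ereal a < c"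
  shows "differentially_private adj
           (\<lambda>d. R2DP_laplace (distr (trunc_normal \<mu> \<sigma> a c) borel (\<lambda>r. 1 / r)) (q d))
           (ln ((\<mu> + \<sigma> * (phi (tn_alpha \<mu> \<sigma> a) - phi (tn_beta \<mu> \<sigma> c))
                      / (Phi (tn_beta \<mu> \<sigma> c) - Phi (tn_alpha \<mu> \<sigma> a)))
                / deriv (mgf (trunc_normal \<mu> \<sigma> a c)) (- sensitivity adj q)))"
proof -
  interpret truncated_normal \<mu> \<sigma> a c
    using \<sigma>_pos a_nonneg a_less_c by unfold_locales
  have "\<mu> + \<sigma> * (phi (tn_alpha \<mu> \<sigma> a) - phi (tn_beta \<mu> \<sigma> c))
          / (Phi (tn_beta \<mu> \<sigma> c) - Phi (tn_alpha \<mu> \<sigma> a))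
      = mgf_deriv (trunc_normal \<mu> \<sigma> a c) 0"
    by (simp add: mgf_deriv_def trunc_normal_mean)
  then show ?thesis
    using differentially_private_R2DP_laplace_inverse[OF sens_bdd mgf_deriv_trunc_normal_pos]
    by (simp add: deriv_mgf)
qed

end
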